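(* Let $\omega=e^{i\theta}$ with $-\pi<\theta\le\pi$. (a) Put $\omega^{1/4}=e^{i\theta/4}$. If $0<|\omega^{1/4}-z|<c_1$ for some $z\in\mathbb{C}$ with $|z|=1$ and some $0<c_1<\sqrt2$, then $|\omega-z^4|>c_2|\omega^{1/4}-z|$, where $c_2=(2-c_1^2)\sqrt{4-c_1^2}$. (b) If $0<|\omega-z^4|<c_0$ for some $z\in\mathbb{C}$ with $|z|=1$ and some $0<c_0\le2$, then $0<|\omega^{1/4}-z|<c_3$ for some fourth root $\omega^{1/4}$ of $\omega$, where $c_3$ is the smallest positive real root of $x^8-8x^6+20x^4-16x^2+c_0^2$. *)

theory Defs
  imports Complex_Main
begin

end

theory Submission
  imports Defs
begin

text \<open>
  For unit complex numbers w, z put d = |w - z|. Writing p = Re (w * cnj z) = 1 - d^2/2,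
  one has |w^4 - z^4|^2 = |(w * cnj z)^4 - 1|^2 = 2 - 2 (8 p^4 - 8 p^2 + 1) = 16 p^2 (1 - p^2),
  that is |w^4 - z^4|^2 = d^2 (4 - d^2) (2 - d^2)^2. Part (a) follows because
  sqrt (4 - d^2) (2 - d^2) decreases in d on [0, sqrt 2]. For part (b), the octic equation says
  c0^2 = c3^2 (4 - c3^2) (2 - c3^2)^2; among the four fourth roots of a given w^4 there is one with
  |Arg (w * cnj z)| \<le> pi/4, i.e. d^2 \<le> 2 - sqrt 2, and t (4 - t) (2 - t)^2 increases on
  [0, 2 - sqrt 2], so |w^4 - z^4| < c0 forces d < c3.
\<close>

lemma norm_diff_one_sq_unit:
  fixes u :: complex
  assumes "cmod u = 1"
  shows "cmod (u - 1)^2 = 2 - 2 * Re u"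
  using assms cmod_power2[of u] cmod_power2[of "u - 1"] by (simp add: power2_eq_square algebra_simps)

lemma norm_diff_rotate_unit:
  fixes w z :: complex
  assumes "cmod z = 1"
  shows "cmod (w - z) = cmod (w * cnj z - 1)"
proof -
  have "w - z = (w * cnj z - 1) * z"
    using assms complex_norm_square[of z] by (simp add: algebra_simps)
  then show ?thesis using assms by (simp add: norm_mult)
qed

lemma norm_diff_sq_unit:
  fixes w z :: complex
  assumes "cmod w = 1" and "cmod z = 1"
  shows "cmod (w - z)^2 = 2 - 2 * Re (w * cnj z)"
  using assms norm_diff_rotate_unit[of z w] norm_diff_one_sq_unit[of "w * cnj z"]
  by (simp add: norm_mult)

lemma Re_power4_unit:
  fixes u :: complex
  assumes "cmod u = 1"
  shows "Re (u^4) = 8 * Re u ^ 4 - 8 * Re u ^ 2 + 1"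
proof -
  have Im_sq: "Im u ^ 2 = 1 - Re u ^ 2" using assms cmod_power2[of u] by simp
  have "Re (u^4) = Re ((u^2)^2)" by (simp flip: power_mult)
  also have "\<dots> = Re (u^2)^2 - Im (u^2)^2" by (simp add: power2_eq_square)
  also have "\<dots> = (Re u ^ 2 - Im u ^ 2)^2 - 4 * Re u ^ 2 * Im u ^ 2"
    by (simp add: power2_eq_square algebra_simps)
  finally show ?thesis unfolding Im_sq by (simp add: power2_eq_square power4_eq_xxxx algebra_simps)
qed

lemma norm_power4_diff_one_sq_unit:
  fixes u :: complex
  assumes "cmod u = 1"
  shows "cmod (u^4 - 1)^2 = 16 * Re u ^ 2 * (1 - Re u ^ 2)"
proof -
  have "cmod (u^4) = 1" using assms by (simp add: norm_power)
  then have "cmod (u^4 - 1)^2 = 2 - 2 * Re (u^4)" by (rule norm_diff_one_sq_unit)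
  then show ?thesis unfolding Re_power4_unit[OF assms]
    by (simp add: power2_eq_square power4_eq_xxxx algebra_simps)
qed

definition power4_chord_sq :: "real \<Rightarrow> real" where
  "power4_chord_sq t = t * (4 - t) * (2 - t)^2"

lemma norm_power4_diff_sq_unit:
  fixes w z :: complex
  assumes w: "cmod w = 1" and z: "cmod z = 1"
  shows "cmod (w^4 - z^4)^2 = power4_chord_sq (cmod (w - z)^2)"
proof -
  define p where "p = Re (w * cnj z)"
  have u: "cmod (w * cnj z) = 1" using w z by (simp add: norm_mult)
  have "cmod (w^4 - z^4) = cmod ((w * cnj z)^4 - 1)"
    using norm_diff_rotate_unit[of "z^4" "w^4"] z by (simp add: norm_power power_mult_distrib)
  then have "cmod (w^4 - z^4)^2 = 16 * p^2 * (1 - p^2)"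
    using norm_power4_diff_one_sq_unit[OF u] by (simp add: p_def)
  moreover have "p = 1 - cmod (w - z)^2 / 2" using norm_diff_sq_unit[OF w z] unfolding p_def by linarith
  ultimately show ?thesis
    by (simp add: power4_chord_sq_def power2_eq_square algebra_simps)
qed

lemma norm_power4_diff_unit:
  fixes w z :: complex
  assumes "cmod w = 1" and "cmod z = 1"
  shows "cmod (w^4 - z^4) = cmod (w - z) * sqrt (4 - cmod (w - z)^2) * \<bar>2 - cmod (w - z)^2\<bar>"
proof -
  have "cmod (w^4 - z^4) = sqrt (cmod (w^4 - z^4)^2)" by simp
  also have "\<dots> = sqrt (cmod (w - z)^2) * sqrt (4 - cmod (w - z)^2) * sqrt ((2 - cmod (w - z)^2)^2)"
    unfolding norm_power4_diff_sq_unit[OF assms] power4_chord_sq_def by (simp add: real_sqrt_mult)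
  finally show ?thesis by simp
qed

lemma power4_chord_sq_mono:
  assumes "s \<le> t" and "t \<le> 2 - sqrt 2"
  shows "power4_chord_sq s \<le> power4_chord_sq t"
proof -
  define P where "P x = (1 - x / 2)^2" for x :: real
  have chord: "power4_chord_sq x = 16 * P x * (1 - P x)" for x
    by (simp add: power4_chord_sq_def P_def power2_eq_square algebra_simps)
  have "sqrt 2 / 2 \<le> 1 - t / 2" using assms(2) by simp
  then have "(sqrt 2 / 2)^2 \<le> P t" unfolding P_def by (rule power_mono) simp
  then have half: "1 / 2 \<le> P t" by (simp add: power_divide)
  have "0 \<le> sqrt 2" by simp
  with assms(2) have "t \<le> 2" by linarith
  then have "P t \<le> P s" unfolding P_def using assms(1) by (auto intro!: power_mono)
  have "power4_chord_sq t - power4_chord_sq s = 16 * ((P s - P t) * (P t + P s - 1))"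
    unfolding chord by (simp add: algebra_simps power2_eq_square)
  also have "\<dots> \<ge> 0" using \<open>P t \<le> P s\<close> half by simp
  finally show ?thesis by simp
qed

lemma norm_power4_diff_gt:
  fixes w z :: complex and c :: real
  assumes "cmod w = 1" and "cmod z = 1"
    and d_pos: "0 < cmod (w - z)" and d_less: "cmod (w - z) < c" and c_less: "c < sqrt 2"
  shows "(2 - c^2) * sqrt (4 - c^2) * cmod (w - z) < cmod (w^4 - z^4)"
proof -
  define d where "d = cmod (w - z)"
  have "c^2 < 2" using power_strict_mono[OF c_less, of 2] d_pos d_less by simp
  moreover have "d^2 < c^2" using d_pos d_less unfolding d_def by (simp add: power_strict_mono)
  ultimately have "(2 - c^2) * sqrt (4 - c^2) < (2 - d^2) * sqrt (4 - d^2)"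
    by (intro mult_strict_mono) auto
  moreover have "\<bar>2 - d^2\<bar> = 2 - d^2" using \<open>d^2 < c^2\<close> \<open>c^2 < 2\<close> by simp
  ultimately show ?thesis
    using d_pos norm_power4_diff_unit[OF assms(1,2)] unfolding d_def[symmetric]
    by (simp add: mult.commute)
qed

lemma fourth_root_of_unity_rotation:
  fixes u :: complex
  obtains \<zeta> where "\<zeta>^4 = 1" and "cmod \<zeta> = 1" and "\<bar>Im (\<zeta> * u)\<bar> \<le> Re (\<zeta> * u)"
proof -
  consider "\<bar>Im u\<bar> \<le> Re u" | "\<bar>Im u\<bar> \<le> - Re u" | "\<bar>Re u\<bar> \<le> Im u" | "\<bar>Re u\<bar> \<le> - Im u"
    by linarith
  then show ?thesis
  proof cases
    case 1
    then show ?thesis by (intro that[of 1]) simp_all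
  next
    case 2
    then show ?thesis by (intro that[of "-1"]) simp_all
  next
    case 3
    then show ?thesis by (intro that[of "-\<i>"]) simp_all
  next
    case 4
    then show ?thesis by (intro that[of \<i>]) simp_all
  qed
qed

lemma exists_fourth_root_near:
  fixes a z :: complex and c0 c3 :: real
  assumes a: "cmod a = 1" and z: "cmod z = 1"
    and e_pos: "0 < cmod (a^4 - z^4)" and e_less: "cmod (a^4 - z^4) < c0"
    and "0 < c3" and c0_eq: "c0^2 = power4_chord_sq (c3^2)"
  shows "\<exists>w. w^4 = a^4 \<and> 0 < cmod (w - z) \<and> cmod (w - z) < c3"
proof -
  obtain \<zeta> where \<zeta>4: "\<zeta>^4 = 1" and \<zeta>1: "cmod \<zeta> = 1"
    and quadrant: "\<bar>Im (\<zeta> * (a * cnj z))\<bar> \<le> Re (\<zeta> * (a * cnj z))"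
    by (rule fourth_root_of_unity_rotation)
  define w where "w = \<zeta> * a"
  define d where "d = cmod (w - z)"
  have w4: "w^4 = a^4" unfolding w_def by (simp add: power_mult_distrib \<zeta>4)
  have w: "cmod w = 1" unfolding w_def using a \<zeta>1 by (simp add: norm_mult)
  define p where "p = Re (w * cnj z)"
  have unit_sq: "p^2 + Im (w * cnj z)^2 = 1"
    using cmod_power2[of "w * cnj z"] w z unfolding p_def by (simp add: norm_mult)
  have "\<bar>Im (w * cnj z)\<bar> \<le> p"
    using quadrant unfolding p_def w_def mult.assoc .
  then have "Im (w * cnj z)^2 \<le> p^2" and "0 \<le> p"
    by (simp_all add: abs_le_square_iff[symmetric])
  with unit_sq have "(sqrt 2 / 2)^2 \<le> p^2" by (simp add: power_divide)
  then have "sqrt 2 / 2 \<le> p" using \<open>0 \<le> p\<close> by (rule power2_le_imp_le)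
  then have d_near: "d^2 \<le> 2 - sqrt 2"
    using norm_diff_sq_unit[OF w z] unfolding d_def p_def by simp
  have "w \<noteq> z" using e_pos w4 by auto
  then have "0 < d" unfolding d_def by simp
  moreover have "d < c3"
  proof (rule ccontr)
    assume "\<not> d < c3"
    then have "c3^2 \<le> d^2" using \<open>0 < c3\<close> by (simp add: power_mono)
    then have "c0^2 \<le> cmod (a^4 - z^4)^2"
      using power4_chord_sq_mono[OF _ d_near] norm_power4_diff_sq_unit[OF w z] c0_eq w4
      unfolding d_def by simp
    moreover have "cmod (a^4 - z^4)^2 < c0^2" using e_pos e_less by (simp add: power_strict_mono)
    ultimately show False by simp
  qed
  ultimately show ?thesis using w4 unfolding d_def by blast
qed

lemma octic_eq_zero_iff:
  fixes x c :: real
  shows "x^8 - 8 * x^6 + 20 * x^4 - 16 * x^2 + c^2 = 0 \<longleftrightarrow> c^2 = power4_chord_sq (x^2)"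
  unfolding power4_chord_sq_def by (simp add: power2_eq_square power_numeral_reduce algebra_simps)

theorem lemma3p7:
  fixes \<theta> :: real
  assumes "- pi < \<theta>" and "\<theta> \<le> pi"
  shows "(\<forall>(z::complex) (c1::real).
            cmod z = 1 \<and> 0 < c1 \<and> c1 < sqrt 2 \<and>
            0 < cmod (exp (\<i> * of_real (\<theta> / 4)) - z) \<and>
            cmod (exp (\<i> * of_real (\<theta> / 4)) - z) < c1 \<longrightarrow>
            cmod (exp (\<i> * of_real \<theta>) - z ^ 4)
              > (2 - c1\<^sup>2) * sqrt (4 - c1\<^sup>2) * cmod (exp (\<i> * of_real (\<theta> / 4)) - z))
       \<and> (\<forall>(z::complex) (c0::real) (c3::real).
            cmod z = 1 \<and> 0 < c0 \<and> c0 \<le> 2 \<and>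
            0 < cmod (exp (\<i> * of_real \<theta>) - z ^ 4) \<and>
            cmod (exp (\<i> * of_real \<theta>) - z ^ 4) < c0 \<and>
            0 < c3 \<and> c3 ^ 8 - 8 * c3 ^ 6 + 20 * c3 ^ 4 - 16 * c3 ^ 2 + c0 ^ 2 = 0 \<and>
            (\<forall>x::real. 0 < x \<and> x ^ 8 - 8 * x ^ 6 + 20 * x ^ 4 - 16 * x ^ 2 + c0 ^ 2 = 0
                 \<longrightarrow> c3 \<le> x) \<longrightarrow>
            (\<exists>w::complex. w ^ 4 = exp (\<i> * of_real \<theta>) \<and>
                 0 < cmod (w - z) \<and> cmod (w - z) < c3))"
proof -
  define a where "a = exp (\<i> * of_real (\<theta> / 4))"
  have a: "cmod a = 1" unfolding a_def by simp
  have "exp (\<i> * of_real \<theta>) = exp (of_nat 4 * (\<i> * of_real (\<theta> / 4)))" by simp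
  then have a4: "exp (\<i> * of_real \<theta>) = a^4" unfolding a_def by (simp only: exp_of_nat_mult)
  show ?thesis
    unfolding a4 a_def[symmetric] octic_eq_zero_iff
    using norm_power4_diff_gt[OF a] exists_fourth_root_near[OF a] by blast
qed

end
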